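(* Let $n\ge 1$ and let $\tau\in \mathrm{RT}(n)$. In dimension $d=1$ one has $F(\tau)=G(\pi(\tau))$, i.e. for all $f_1,\dots,f_n\in C^\infty(\mathbb{R},\mathbb{R})$, $$F(\tau)(f_1,\dots,f_n)=f_1^{(\varphi_\tau(1))}\cdots f_n^{(\varphi_\tau(n))},$$ where $\varphi_\tau(v)$ is the number of children of the vertex $v$ in $\tau$.
   Context: A rooted tree on a finite vertex set $V\subset\mathbb{N}$ is a set $E$ of ordered pairs of elements of $V$ (an edge $(v,w)$ means $w$ is a child of $v$) such that exactly one vertex $r$ (the root) has no parent, every other vertex $w$ has exactly one parent (exactly one $v$ with $(v,w)\in E$), and every vertex is connected to the root by following parents. $C_v=\{w:(v,w)\in E\}$ is the set of children of $v$; for $v\in V$, $\tau_v$ is the subtree consisting of $v$ and all vertices above it (descendants), with the induced edges. $\mathrm{RT}(n)$ is the set of rooted trees with vertex set $[n]=\{1,\dots,n\}$. Elementary differentials: let $\mathcal{C}_d=C^\infty(\mathbb{R}^d,\mathbb{R}^d)$, $g_j$ the $j$-th coordinate of $g$, $\partial_j=\partial/\partial x_j$. For a rooted tree $\tau$ on $V$ with root $r$ whose children are $v_1,\dots,v_k$, and for $f^i\in\mathcal{C}_d$ ($i\in V$), define recursively $$F(\tau)((f^i)_{i\in V})=\sum_{j_1,\dots,j_k=1}^d F(\tau_{v_1})((f^i)_{i\in V(\tau_{v_1})})_{j_1}\cdots F(\tau_{v_k})((f^i)_{i\in V(\tau_{v_k})})_{j_k}\,\partial_{j_1}\cdots\partial_{j_k}f^r$$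 (for a single vertex, $F(\tau)=f^r$). For $d=1$ this is an $n$-linear map $C^\infty(\mathbb{R},\mathbb{R})^n\to C^\infty(\mathbb{R},\mathbb{R})$. A multi-index on $[n]$ is a map $\varphi:[n]\to\mathbb{N}$ with $\sum_{v}\varphi(v)=n-1$; $\mathrm{MI}(n)$ is the set of these. The map $\pi:\mathrm{RT}(n)\to\mathrm{MI}(n)$ sends $\tau$ to $\varphi_\tau$, $\varphi_\tau(v)=|C_v|$. For $\varphi\in\mathrm{MI}(n)$, $G(\varphi)(f_1,\dots,f_n)=f_1^{(\varphi(1))}\cdots f_n^{(\varphi(n))}$, where $f^{(k)}$ is the $k$-th derivative. *)

theory Defs
  imports "HOL-Analysis.Analysis"
begin

text \<open>Rooted trees: a set E of ordered pairs (v,w), meaning w is a child of v.\<close>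

definition has_parent :: "(nat \<times> nat) set \<Rightarrow> nat \<Rightarrow> bool" where
  "has_parent E w \<longleftrightarrow> (\<exists>v. (v, w) \<in> E)"

definition is_rooted_tree :: "nat set \<Rightarrow> (nat \<times> nat) set \<Rightarrow> bool" where
  "is_rooted_tree V E \<longleftrightarrow>
     finite V \<and> E \<subseteq> V \<times> V \<and>
     (\<exists>!r. r \<in> V \<and> \<not> has_parent E r) \<and>
     (\<forall>w\<in>V. has_parent E w \<longrightarrow> (\<exists>!v. (v, w) \<in> E)) \<and>
     (\<forall>r\<in>V. \<not> has_parent E r \<longrightarrow> (\<forall>w\<in>V. (r, w) \<in> E\<^sup>*))"

definition tree_root :: "nat set \<Rightarrow> (nat \<times> nat) set \<Rightarrow> nat" where
  "tree_root V E = (THE r. r \<in> V \<and> \<not> has_parent E r)"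

definition children :: "(nat \<times> nat) set \<Rightarrow> nat \<Rightarrow> nat set" where
  "children E v = {w. (v, w) \<in> E}"

definition RT :: "nat \<Rightarrow> (nat \<times> nat) set set" where
  "RT n = {E. is_rooted_tree {1..n} E}"

definition MI :: "nat \<Rightarrow> (nat \<Rightarrow> nat) set" where
  "MI n = {\<phi>. (\<Sum>v=1..n. \<phi> v) = n - 1}"

definition tree_pi :: "(nat \<times> nat) set \<Rightarrow> nat \<Rightarrow> nat" where
  "tree_pi E = (\<lambda>v. card (children E v))"

definition smooth_fun :: "(real \<Rightarrow> real) \<Rightarrow> bool" where
  "smooth_fun f \<longleftrightarrow> (\<forall>k x. ((deriv ^^ k) f) differentiable (at x))"

text \<open>Elementary differential in dimension d = 1. For d = 1 the sum over
  j_1..j_k ranges over the single index 1, so the recursion reads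
  F(tau_v) = F(tau_{v_1}) * ... * F(tau_{v_k}) * f_v^{(k)}.
  elem_diff1 E f v g  means  g = F(tau_v)((f i)_{i in V(tau_v)}).\<close>
inductive elem_diff1 :: "(nat \<times> nat) set \<Rightarrow> (nat \<Rightarrow> real \<Rightarrow> real) \<Rightarrow> nat \<Rightarrow> (real \<Rightarrow> real) \<Rightarrow> bool"
  for E f where
  "(\<forall>c\<in>children E v. elem_diff1 E f c (g c)) \<Longrightarrow>
   elem_diff1 E f v (\<lambda>x. (\<Prod>c\<in>children E v. g c x) * (deriv ^^ card (children E v)) (f v) x)"

definition F1 :: "nat set \<Rightarrow> (nat \<times> nat) set \<Rightarrow> (nat \<Rightarrow> real \<Rightarrow> real) \<Rightarrow> real \<Rightarrow> real" where
  "F1 V E f = (THE g. elem_diff1 E f (tree_root V E) g)"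

definition G :: "nat \<Rightarrow> (nat \<Rightarrow> nat) \<Rightarrow> (nat \<Rightarrow> real \<Rightarrow> real) \<Rightarrow> real \<Rightarrow> real" where
  "G n \<phi> f = (\<lambda>x. \<Prod>i=1..n. (deriv ^^ \<phi> i) (f i) x)"

end

theory Submission
  imports Defs
begin

text \<open>The subtree of v is the disjoint union of {v} and the subtrees of the children of v.
  Hence the product of f_w^{(|C_w|)} over the subtree of v satisfies exactly the recursion
  defining F(tau_v), and since the child relation of a finite tree is well-founded, it is the
  only solution of that recursion. At the root the subtree is all of [n].\<close>

locale rooted_tree =
  fixes V :: "nat set" and E :: "(nat \<times> nat) set" and r :: nat
  assumes finite_V: "finite V"
    and edges_subset: "E \<subseteq> V \<times> V"
    and root_in: "r \<in> V"
    and root_no_parent: "\<not> has_parent E r"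
    and parent_unique: "\<And>v v' w. (v, w) \<in> E \<Longrightarrow> (v', w) \<in> E \<Longrightarrow> v = v'"
    and root_reaches: "\<And>w. w \<in> V \<Longrightarrow> (r, w) \<in> E\<^sup>*"
begin

definition depth :: "nat \<Rightarrow> nat" where
  "depth w = (LEAST k. (r, w) \<in> E ^^ k)"

definition descendants :: "nat \<Rightarrow> nat set" where
  "descendants v = {w. (v, w) \<in> E\<^sup>*}"

lemma relpow_depth: "w \<in> V \<Longrightarrow> (r, w) \<in> E ^^ depth w"
  unfolding depth_def using root_reaches rtrancl_power by (metis LeastI)

lemma depth_le: "(r, w) \<in> E ^^ k \<Longrightarrow> depth w \<le> k"
  unfolding depth_def by (rule Least_le)

lemma depth_edge:
  assumes "(v, w) \<in> E"
  shows "depth w = Suc (depth v)"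
proof -
  have "v \<in> V" "w \<in> V" using assms edges_subset by auto
  have "(r, w) \<in> E ^^ Suc (depth v)" using relpow_depth[OF \<open>v \<in> V\<close>] assms by auto
  then have upper: "depth w \<le> Suc (depth v)" by (rule depth_le)
  have path: "(r, w) \<in> E ^^ depth w" using relpow_depth[OF \<open>w \<in> V\<close>] .
  have "depth w \<noteq> 0"
  proof
    assume "depth w = 0"
    with path have "w = r" by simp
    with assms root_no_parent show False unfolding has_parent_def by blast
  qed
  then obtain k where k: "depth w = Suc k" using not0_implies_Suc by blast
  with path obtain u where "(r, u) \<in> E ^^ k" "(u, w) \<in> E" by auto
  moreover from this have "u = v" using parent_unique assms by blast
  ultimately have "depth v \<le> k" using depth_le by blast
  with k upper show ?thesis by simp
qed

lemma depth_relpow: "(a, w) \<in> E ^^ k \<Longrightarrow> depth w = depth a + k"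
proof (induction k arbitrary: w)
  case 0
  then show ?case by simp
next
  case (Suc k)
  then obtain u where "(a, u) \<in> E ^^ k" "(u, w) \<in> E" by auto
  with Suc.IH depth_edge show ?case by fastforce
qed

lemma acyclic_edges: "acyclic E"
  unfolding acyclic_def
proof
  fix v
  show "(v, v) \<notin> E\<^sup>+"
  proof
    assume "(v, v) \<in> E\<^sup>+"
    then obtain k where "k > 0" "(v, v) \<in> E ^^ k" using trancl_power by blast
    then show False using depth_relpow by fastforce
  qed
qed

lemma wf_converse_edges: "wf (E\<inverse>)"
proof (rule finite_acyclic_wf_converse)
  show "finite E" using finite_subset[OF edges_subset] finite_V by blast
qed (rule acyclic_edges)

lemma relpow_same_target_eq:
  "(a, w) \<in> E ^^ k \<Longrightarrow> (b, w) \<in> E ^^ k \<Longrightarrow> a = b"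
proof (induction k arbitrary: w)
  case 0
  then show ?case by simp
next
  case (Suc k)
  from Suc.prems obtain u u' where
    "(a, u) \<in> E ^^ k" "(u, w) \<in> E" "(b, u') \<in> E ^^ k" "(u', w) \<in> E"
    by (meson relpow_Suc_E)
  with parent_unique Suc.IH show ?case by blast
qed

lemma finite_children: "finite (children E v)"
  using finite_subset[of "children E v" V] edges_subset finite_V
  unfolding children_def by blast

lemma descendants_subset: "descendants v \<subseteq> insert v V"
proof
  fix w
  assume "w \<in> descendants v"
  then have "(v, w) \<in> E\<^sup>*" unfolding descendants_def by simp
  then show "w \<in> insert v V" by (induction rule: rtrancl_induct) (use edges_subset in auto)
qed

lemma finite_descendants: "finite (descendants v)"
  using finite_subset[OF descendants_subset] finite_V by simp

lemma descendants_unfold: "descendants v = insert v (\<Union>c\<in>children E v. descendants c)"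
  unfolding descendants_def children_def
  by (auto elim: converse_rtranclE intro: converse_rtrancl_into_rtrancl)

lemma not_in_descendants_child: "c \<in> children E v \<Longrightarrow> v \<notin> descendants c"
  using acyclic_edges unfolding acyclic_def children_def descendants_def
  by (meson mem_Collect_eq rtrancl_into_trancl2)

lemma descendants_children_disjoint:
  assumes "c1 \<in> children E v" "c2 \<in> children E v" "c1 \<noteq> c2"
  shows "descendants c1 \<inter> descendants c2 = {}"
proof (rule ccontr)
  assume "descendants c1 \<inter> descendants c2 \<noteq> {}"
  then obtain w k1 k2 where k: "(c1, w) \<in> E ^^ k1" "(c2, w) \<in> E ^^ k2"
    unfolding descendants_def using rtrancl_power by blast
  have "depth c1 = depth c2" using assms depth_edge unfolding children_def by simp
  then have "k1 = k2" using depth_relpow[OF k(1)] depth_relpow[OF k(2)] by simp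
  with k assms(3) show False using relpow_same_target_eq by blast
qed

lemma prod_descendants:
  "prod h (descendants v) = h v * (\<Prod>c\<in>children E v. prod h (descendants c))"
proof -
  have "v \<notin> (\<Union>c\<in>children E v. descendants c)" using not_in_descendants_child by blast
  then have "prod h (descendants v) = h v * prod h (\<Union>c\<in>children E v. descendants c)"
    using finite_children finite_descendants by (subst descendants_unfold) simp
  also have "prod h (\<Union>c\<in>children E v. descendants c) =
      (\<Prod>c\<in>children E v. prod h (descendants c))"
    using finite_children finite_descendants descendants_children_disjoint
    by (intro prod.UNION_disjoint) auto
  finally show ?thesis .
qed

lemma descendants_root: "descendants r = V"
proof
  show "descendants r \<subseteq> V" using descendants_subset root_in by blast
  show "V \<subseteq> descendants r" using root_reaches unfolding descendants_def by blast
qed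

abbreviation subtree_differential :: "(nat \<Rightarrow> real \<Rightarrow> real) \<Rightarrow> nat \<Rightarrow> real \<Rightarrow> real" where
  "subtree_differential f v \<equiv>
     \<lambda>x. \<Prod>w\<in>descendants v. (deriv ^^ card (children E w)) (f w) x"

lemma subtree_differential_unfold:
  "subtree_differential f v =
     (\<lambda>x. (\<Prod>c\<in>children E v. subtree_differential f c x) * (deriv ^^ card (children E v)) (f v) x)"
  by (subst prod_descendants) (simp add: mult.commute)

lemma elem_diff1_subtree_differential: "elem_diff1 E f v (subtree_differential f v)"
  using wf_converse_edges
proof (induction v rule: wf_induct_rule)
  case (less v)
  then have "\<forall>c\<in>children E v. elem_diff1 E f c (subtree_differential f c)"
    unfolding children_def by blast
  then show ?case by (subst subtree_differential_unfold) (rule elem_diff1.intros)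
qed

lemma elem_diff1_unique: "elem_diff1 E f v g \<Longrightarrow> g = subtree_differential f v"
proof (induction rule: elem_diff1.induct)
  case (1 v g)
  then show ?case by (subst subtree_differential_unfold) (simp cong: prod.cong)
qed

lemma F1_eq_prod: "F1 V E f = (\<lambda>x. \<Prod>w\<in>V. (deriv ^^ card (children E w)) (f w) x)"
proof -
  have root: "tree_root V E = r"
    unfolding tree_root_def
  proof (rule the_equality)
    show "r \<in> V \<and> \<not> has_parent E r" using root_in root_no_parent ..
  next
    fix r' assume "r' \<in> V \<and> \<not> has_parent E r'"
    then have "(r, r') \<in> E\<^sup>*" and "\<not> has_parent E r'" using root_reaches by auto
    then show "r' = r" unfolding has_parent_def by (metis rtranclE)
  qed
  have "F1 V E f = subtree_differential f r"
    unfolding F1_def root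
    by (rule the_equality) (rule elem_diff1_subtree_differential, erule elem_diff1_unique)
  then show ?thesis by (simp only: descendants_root)
qed

end

lemma rooted_tree_tree_root:
  assumes "is_rooted_tree V E"
  shows "rooted_tree V E (tree_root V E)"
proof -
  have finite: "finite V" and edges: "E \<subseteq> V \<times> V"
    and root_unique: "\<exists>!r. r \<in> V \<and> \<not> has_parent E r"
    and parent_unique: "\<forall>w\<in>V. has_parent E w \<longrightarrow> (\<exists>!v. (v, w) \<in> E)"
    and reaches: "\<forall>r\<in>V. \<not> has_parent E r \<longrightarrow> (\<forall>w\<in>V. (r, w) \<in> E\<^sup>*)"
    using assms unfolding is_rooted_tree_def by simp_all
  have root: "tree_root V E \<in> V" "\<not> has_parent E (tree_root V E)"
    using theI'[OF root_unique] unfolding tree_root_def by simp_all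
  show ?thesis
  proof
    show "finite V" "E \<subseteq> V \<times> V" by (fact finite edges)+
    show "tree_root V E \<in> V" "\<not> has_parent E (tree_root V E)" by (fact root)+
    show "v = v'" if "(v, w) \<in> E" "(v', w) \<in> E" for v v' w
    proof -
      have "\<exists>!v. (v, w) \<in> E"
        using parent_unique that edges unfolding has_parent_def by blast
      with that show ?thesis by blast
    qed
    show "(tree_root V E, w) \<in> E\<^sup>*" if "w \<in> V" for w
      using reaches root that by blast
  qed
qed

theorem proposition2p6:
  fixes n :: nat and E :: "(nat \<times> nat) set" and f :: "nat \<Rightarrow> real \<Rightarrow> real"
  assumes "n \<ge> 1" and "E \<in> RT n"
    and "\<forall>i\<in>{1..n}. smooth_fun (f i)"
  shows "F1 {1..n} E f = G n (tree_pi E) f"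
proof -
  interpret rooted_tree "{1..n}" E "tree_root {1..n} E"
    using assms(2) rooted_tree_tree_root unfolding RT_def by blast
  show ?thesis unfolding F1_eq_prod G_def tree_pi_def ..
qed

end
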